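(* Let $A_1,\dots,A_N$ be formulae built from variables other than $q$ using only $\cdot$, $\backslash$, $/$. Let $$\Phi = !((s/s)/!\,[]^{-1}A_1),\ !\,[]^{-1}A_1,\ \dots,\ !((s/s)/!\,[]^{-1}A_N),\ !\,[]^{-1}A_N .$$ Then $\Phi$ internalises $\{A_1,\dots,A_N\}$ in $\mathcal{F}^{\mathrm{mult}}_{2015}$, that is: (1) the sequent $\Phi,s\to s$ is derivable in $\mathcal{F}^{\mathrm{mult}}_{2015}$; (2) for every $i\in\{1,\dots,N\}$, all sequences of tree terms $\Delta_1,\Delta_2$ and every formula $C$, if $\Phi,\Delta_1,A_i,\Delta_2\to C$ is derivable in $\mathcal{F}^{\mathrm{mult}}_{2015}$ then so is $\Phi,\Delta_1,\Delta_2\to C$; (3) the sequent $!A_1,\dots,!A_N\to \prod\pi_q(\Phi)$ is derivable in $\mathcal{E}^{\mathrm{mult}}$.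
   Context: $s$ and $q$ are two fixed distinct variables. Formulae are built from a countable set of variables and $\mathbf1$ by $\backslash,/,\cdot$ and the unary $\langle\rangle$, $[]^{-1}$, $!$. Stoup-free bracketed calculus $\mathcal{F}^{\mathrm{mult}}_{2015}$: a tree term is a formula or $[\Xi]$ with $\Xi$ a meta-formula; a meta-formula is a finite sequence of tree terms (empty $\Lambda$); sequents $\Xi\to C$; $\Xi(\Theta)$ designates an occurrence of a meta-formula $\Theta$ which is $\Xi$ itself or the full content of some bracket $[\Theta]$ at any depth. Rules: axioms $A\to A$, $\Lambda\to\mathbf1$; ($/L$) from $\Gamma\to B$ and $\Xi(\Delta_1,C,\Delta_2)\to D$ infer $\Xi(\Delta_1,C/B,\Gamma,\Delta_2)\to D$; ($/R$) from $\Gamma,B\to C$ infer $\Gamma\to C/B$; ($\backslash L$) from $\Gamma\to A$ and $\Xi(\Delta_1,C,\Delta_2)\to D$ infer $\Xi(\Delta_1,\Gamma,A\backslash C,\Delta_2)\to D$; ($\backslash R$) from $A,\Gamma\to C$ infer $\Gamma\to A\backslash C$; ($\cdot L$) from $\Xi(\Delta_1,A,B,\Delta_2)\to D$ infer $\Xi(\Delta_1,A\cdot B,\Delta_2)\to D$; ($\cdot R$) from $\Delta\to A$ and $\Gamma\to B$ infer $\Delta,\Gamma\to A\cdot B$; ($\mathbf1L$) from $\Xi(\Delta_1,\Delta_2)\to A$ infer $\Xi(\Delta_1,\mathbf1,\Delta_2)\to A$; ($[]^{-1}L$) from $\Xi(\Delta_1,A,\Delta_2)\to B$ infer $\Xi(\Delta_1,[[]^{-1}A],\Delta_2)\to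 B$; ($[]^{-1}R$) from $[\Xi]\to A$ infer $\Xi\to[]^{-1}A$; ($\langle\rangle L$) from $\Xi(\Delta_1,[A],\Delta_2)\to B$ infer $\Xi(\Delta_1,\langle\rangle A,\Delta_2)\to B$; ($\langle\rangle R$) from $\Xi\to A$ infer $[\Xi]\to\langle\rangle A$; ($!L$) from $\Xi(\Delta_1,A,\Delta_2)\to C$ infer $\Xi(\Delta_1,!A,\Delta_2)\to C$; ($!P_1$) from $\Xi(\Delta_1,!A,\Phi,\Delta_2)\to C$ infer $\Xi(\Delta_1,\Phi,!A,\Delta_2)\to C$; ($!P_2$) the converse; ($!R$) from $!A_1,\dots,!A_n\to B$ infer $!A_1,\dots,!A_n\to!B$ ($n\ge1$); ($!C$) from $\Xi(!A_1,\dots,!A_n,\Gamma_1,[!A_1,\dots,!A_n,\Gamma_2],\Gamma_3)\to C$ infer $\Xi(!A_1,\dots,!A_n,\Gamma_1,\Gamma_2,\Gamma_3)\to C$ ($n\ge1$); (cut) from $\Pi\to A$ and $\Xi(\Gamma_1,A,\Gamma_2)\to C$ infer $\Xi(\Gamma_1,\Pi,\Gamma_2)\to C$. Bracket-free calculus $\mathcal{E}^{\mathrm{mult}}$: formulae without bracket modalities; sequents $\Pi\to A$, $\Pi$ a finite sequence of formulae; axioms $A\to A$, $\Lambda\to\mathbf1$; rules ($\backslash L$) from $\Pi\to A$ and $\Delta_1,B,\Delta_2\to C$ infer $\Delta_1,\Pi,A\backslash B,\Delta_2\to C$; ($\backslash R$) from $A,\Pi\to B$ infer $\Pi\to A\backslash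 B$; ($/L$) from $\Pi\to A$ and $\Delta_1,B,\Delta_2\to C$ infer $\Delta_1,B/A,\Pi,\Delta_2\to C$; ($/R$) from $\Pi,A\to B$ infer $\Pi\to B/A$; ($\cdot L$), ($\cdot R$), ($\mathbf1L$) standard; ($!R$) from $!A_1,\dots,!A_n\to B$ infer $!A_1,\dots,!A_n\to!B$ ($n\geq0$); ($!L$) from $\Delta_1,A,\Delta_2\to C$ infer $\Delta_1,!A,\Delta_2\to C$; ($!P_1$), ($!P_2$) permuting $!A$ with any sequence $\Phi$ in either direction; ($!C$) from $\Delta_1,!A,!A,\Delta_2\to C$ infer $\Delta_1,!A,\Delta_2\to C$; ($!W$) from $\Delta_1,\Delta_2\to C$ infer $\Delta_1,!A,\Delta_2\to C$; (cut). The projection $\pi_q$ maps formulae by $\pi_q(q)=\mathbf1$, $\pi_q(p)=p$ for variables $p\ne q$, $\pi_q(\mathbf1)=\mathbf1$, commuting with $\backslash,/,\cdot,!$, and $\pi_q(\langle\rangle A)=\pi_q([]^{-1}A)=\pi_q(A)$; on meta-formulae it is applied elementwise and erases brackets ($\pi_q([\Xi])=\pi_q(\Xi)$). For a sequence $E_1,\dots,E_k$ of formulae, $\prod(E_1,\dots,E_k)=E_1\cdot\ldots\cdot E_k$. *)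

theory Defs
  imports Main
begin

text \<open>LDiv A C is A\C, RDiv C B is C/B, Prod A B is A.B, Diam is the bracket modality
  (angle brackets), BInv is the inverse bracket modality, Bang is the exponential.\<close>
datatype fm = Var nat | One | LDiv fm fm | RDiv fm fm | Prod fm fm
  | Diam fm | BInv fm | Bang fm

datatype tt = F fm | Br "tt list"

text \<open>Contexts Xi(-): the hole is either the whole meta-formula or the full
  content of some bracket at any depth.\<close>
datatype ctx = Hole | InBr "tt list" ctx "tt list"

fun fill :: "ctx \<Rightarrow> tt list \<Rightarrow> tt list" where
  "fill Hole Th = Th"
| "fill (InBr L c R) Th = L @ [Br (fill c Th)] @ R"

abbreviation bangs :: "fm list \<Rightarrow> tt list" where
  "bangs As \<equiv> map (\<lambda>A. F (Bang A)) As"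

inductive derF :: "tt list \<Rightarrow> fm \<Rightarrow> bool" where
  ax: "derF [F A] A"
| oneR: "derF [] One"
| rdivL: "\<lbrakk>derF G B; derF (fill X (D1 @ [F C] @ D2)) D\<rbrakk>
          \<Longrightarrow> derF (fill X (D1 @ [F (RDiv C B)] @ G @ D2)) D"
| rdivR: "derF (G @ [F B]) C \<Longrightarrow> derF G (RDiv C B)"
| ldivL: "\<lbrakk>derF G A; derF (fill X (D1 @ [F C] @ D2)) D\<rbrakk>
          \<Longrightarrow> derF (fill X (D1 @ G @ [F (LDiv A C)] @ D2)) D"
| ldivR: "derF (F A # G) C \<Longrightarrow> derF G (LDiv A C)"
| prodL: "derF (fill X (D1 @ [F A, F B] @ D2)) D \<Longrightarrow> derF (fill X (D1 @ [F (Prod A B)] @ D2)) D"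
| prodR: "\<lbrakk>derF D A; derF G B\<rbrakk> \<Longrightarrow> derF (D @ G) (Prod A B)"
| oneL: "derF (fill X (D1 @ D2)) A \<Longrightarrow> derF (fill X (D1 @ [F One] @ D2)) A"
| binvL: "derF (fill X (D1 @ [F A] @ D2)) B \<Longrightarrow> derF (fill X (D1 @ [Br [F (BInv A)]] @ D2)) B"
| binvR: "derF [Br X] A \<Longrightarrow> derF X (BInv A)"
| diamL: "derF (fill X (D1 @ [Br [F A]] @ D2)) B \<Longrightarrow> derF (fill X (D1 @ [F (Diam A)] @ D2)) B"
| diamR: "derF X A \<Longrightarrow> derF [Br X] (Diam A)"
| bangL: "derF (fill X (D1 @ [F A] @ D2)) C \<Longrightarrow> derF (fill X (D1 @ [F (Bang A)] @ D2)) C"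
| bangP1: "derF (fill X (D1 @ [F (Bang A)] @ P @ D2)) C \<Longrightarrow> derF (fill X (D1 @ P @ [F (Bang A)] @ D2)) C"
| bangP2: "derF (fill X (D1 @ P @ [F (Bang A)] @ D2)) C \<Longrightarrow> derF (fill X (D1 @ [F (Bang A)] @ P @ D2)) C"
| bangR: "\<lbrakk>As \<noteq> []; derF (bangs As) B\<rbrakk> \<Longrightarrow> derF (bangs As) (Bang B)"
| bangC: "\<lbrakk>As \<noteq> []; derF (fill X (bangs As @ G1 @ [Br (bangs As @ G2)] @ G3)) C\<rbrakk>
          \<Longrightarrow> derF (fill X (bangs As @ G1 @ G2 @ G3)) C"
| cut: "\<lbrakk>derF P A; derF (fill X (G1 @ [F A] @ G2)) C\<rbrakk> \<Longrightarrow> derF (fill X (G1 @ P @ G2)) C"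

datatype efm = EVar nat | EOne | ELDiv efm efm | ERDiv efm efm | EProd efm efm | EBang efm

inductive derE :: "efm list \<Rightarrow> efm \<Rightarrow> bool" where
  eax: "derE [A] A"
| eoneR: "derE [] EOne"
| eldivL: "\<lbrakk>derE P A; derE (D1 @ [B] @ D2) C\<rbrakk> \<Longrightarrow> derE (D1 @ P @ [ELDiv A B] @ D2) C"
| eldivR: "derE (A # P) B \<Longrightarrow> derE P (ELDiv A B)"
| erdivL: "\<lbrakk>derE P A; derE (D1 @ [B] @ D2) C\<rbrakk> \<Longrightarrow> derE (D1 @ [ERDiv B A] @ P @ D2) C"
| erdivR: "derE (P @ [A]) B \<Longrightarrow> derE P (ERDiv B A)"
| eprodL: "derE (D1 @ [A, B] @ D2) C \<Longrightarrow> derE (D1 @ [EProd A B] @ D2) C"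
| eprodR: "\<lbrakk>derE D A; derE G B\<rbrakk> \<Longrightarrow> derE (D @ G) (EProd A B)"
| eoneL: "derE (D1 @ D2) C \<Longrightarrow> derE (D1 @ [EOne] @ D2) C"
| ebangR: "derE (map EBang As) B \<Longrightarrow> derE (map EBang As) (EBang B)"
| ebangL: "derE (D1 @ [A] @ D2) C \<Longrightarrow> derE (D1 @ [EBang A] @ D2) C"
| ebangP1: "derE (D1 @ [EBang A] @ P @ D2) C \<Longrightarrow> derE (D1 @ P @ [EBang A] @ D2) C"
| ebangP2: "derE (D1 @ P @ [EBang A] @ D2) C \<Longrightarrow> derE (D1 @ [EBang A] @ P @ D2) C"
| ebangC: "derE (D1 @ [EBang A, EBang A] @ D2) C \<Longrightarrow> derE (D1 @ [EBang A] @ D2) C"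
| ebangW: "derE (D1 @ D2) C \<Longrightarrow> derE (D1 @ [EBang A] @ D2) C"
| ecut: "\<lbrakk>derE P A; derE (D1 @ [A] @ D2) C\<rbrakk> \<Longrightarrow> derE (D1 @ P @ D2) C"

fun piq :: "nat \<Rightarrow> fm \<Rightarrow> efm" where
  "piq q (Var p) = (if p = q then EOne else EVar p)"
| "piq q One = EOne"
| "piq q (LDiv A B) = ELDiv (piq q A) (piq q B)"
| "piq q (RDiv A B) = ERDiv (piq q A) (piq q B)"
| "piq q (Prod A B) = EProd (piq q A) (piq q B)"
| "piq q (Diam A) = piq q A"
| "piq q (BInv A) = piq q A"
| "piq q (Bang A) = EBang (piq q A)"

fun piq_tt :: "nat \<Rightarrow> tt \<Rightarrow> efm list" where
  "piq_tt q (F A) = [piq q A]"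
| "piq_tt q (Br Xi) = concat (map (piq_tt q) Xi)"

definition piq_meta :: "nat \<Rightarrow> tt list \<Rightarrow> efm list" where
  "piq_meta q Xi = concat (map (piq_tt q) Xi)"

fun eprod :: "efm list \<Rightarrow> efm" where
  "eprod [] = EOne"
| "eprod [E] = E"
| "eprod (E # Es) = EProd E (eprod Es)"

fun mult_noq :: "nat \<Rightarrow> fm \<Rightarrow> bool" where
  "mult_noq q (Var p) = (p \<noteq> q)"
| "mult_noq q (LDiv A B) = (mult_noq q A \<and> mult_noq q B)"
| "mult_noq q (RDiv A B) = (mult_noq q A \<and> mult_noq q B)"
| "mult_noq q (Prod A B) = (mult_noq q A \<and> mult_noq q B)"
| "mult_noq q _ = False"

definition PhiF :: "nat \<Rightarrow> fm list \<Rightarrow> tt list" where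
  "PhiF s As = concat (map (\<lambda>A. [F (Bang (RDiv (RDiv (Var s) (Var s)) (Bang (BInv A)))),
                                   F (Bang (BInv A))]) As)"

end

theory Submission
  imports Defs
begin

text \<open>Each block \<open>!((s/s)/![]\<^sup>-\<^sup>1A), ![]\<^sup>-\<^sup>1A\<close> of \<open>\<Phi>\<close> can be discharged in front of any
  antecedent proving \<open>s\<close>: the second formula is the argument of the first, and the resulting
  \<open>s/s\<close> consumes the \<open>s\<close> that is derived afterwards. Since \<open>[![]\<^sup>-\<^sup>1A] \<rightarrow> A\<close>, a cut
  replaces an occurrence of \<open>A\<close> by the bracket \<open>[![]\<^sup>-\<^sup>1A]\<close>, and contraction \<open>!C\<close> absorbs
  this bracket into the copy of \<open>![]\<^sup>-\<^sup>1A\<close> in \<open>\<Phi>\<close>, permuted to the front for the purpose.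
  In the bracket-free calculus \<open>(x/x)/!a\<close> is derivable from nothing by weakening, so the
  projection of every first formula of a block is provable outright and the product
  \<open>\<Prod>\<pi>\<^sub>q(\<Phi>)\<close> only needs the formulae \<open>!\<pi>\<^sub>q(A\<^sub>i)\<close>.\<close>

lemma rdivL_top: "derF G B \<Longrightarrow> derF (D1 @ [F C] @ D2) D \<Longrightarrow> derF (D1 @ [F (RDiv C B)] @ G @ D2) D"
  using rdivL[of G B Hole D1 C D2 D] by simp

lemma bangL_top: "derF (D1 @ [F A] @ D2) C \<Longrightarrow> derF (D1 @ [F (Bang A)] @ D2) C"
  using bangL[of Hole D1 A D2 C] by simp

lemma bangP1_top: "derF (D1 @ [F (Bang A)] @ P @ D2) C \<Longrightarrow> derF (D1 @ P @ [F (Bang A)] @ D2) C"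
  using bangP1[of Hole D1 A P D2 C] by simp

lemma bangP2_top: "derF (D1 @ P @ [F (Bang A)] @ D2) C \<Longrightarrow> derF (D1 @ [F (Bang A)] @ P @ D2) C"
  using bangP2[of Hole D1 P A D2 C] by simp

lemma cut_top: "derF P A \<Longrightarrow> derF (G1 @ [F A] @ G2) C \<Longrightarrow> derF (G1 @ P @ G2) C"
  using cut[of P A Hole G1 G2 C] by simp

lemma PhiF_Nil [simp]: "PhiF s [] = []"
  by (simp add: PhiF_def)

lemma PhiF_Cons [simp]:
  "PhiF s (A # As) = F (Bang (RDiv (RDiv (Var s) (Var s)) (Bang (BInv A)))) # F (Bang (BInv A)) # PhiF s As"
  by (simp add: PhiF_def)

lemma PhiF_append: "PhiF s (As @ Bs) = PhiF s As @ PhiF s Bs"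
  by (simp add: PhiF_def)

lemma PhiF_decompose:
  assumes "A \<in> set As"
  obtains P1 P2 where "PhiF s As = P1 @ [F (Bang (BInv A))] @ P2"
proof -
  obtain Bs Cs where "As = Bs @ A # Cs"
    using assms split_list by metis
  then have "PhiF s As = (PhiF s Bs @ [F (Bang (RDiv (RDiv (Var s) (Var s)) (Bang (BInv A))))])
      @ [F (Bang (BInv A))] @ PhiF s Cs"
    by (simp add: PhiF_append)
  then show ?thesis
    using that by blast
qed

lemma derF_PhiF_block:
  assumes "derF G (Var s)"
  shows "derF (F (Bang (RDiv (RDiv (Var s) (Var s)) (Bang B))) # F (Bang B) # G) (Var s)"
proof -
  have "derF ([F (RDiv (Var s) (Var s))] @ G @ []) (Var s)"
    using rdivL_top[OF assms, of "[]" "Var s" "[]"] ax by simp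
  then have "derF ([] @ [F (RDiv (RDiv (Var s) (Var s)) (Bang B))] @ [F (Bang B)] @ G) (Var s)"
    using rdivL_top[OF ax[of "Bang B"], of "[]" "RDiv (Var s) (Var s)" G] by simp
  from bangL_top[OF this] show ?thesis
    by simp
qed

lemma derF_PhiF_prefix: "derF G (Var s) \<Longrightarrow> derF (PhiF s As @ G) (Var s)"
  by (induction As) (simp_all add: derF_PhiF_block)

lemma derF_bracket_bang_binv: "derF [Br [F (Bang (BInv A))]] A"
proof -
  have "derF [Br [F (BInv A)]] A"
    using binvL[of Hole "[]" A "[]" A] ax by simp
  then show ?thesis
    using bangL[of "InBr [] Hole []" "[]" "BInv A" "[]" A] by simp
qed

lemma derF_contract_bracket_bang:
  assumes "derF (P1 @ [F (Bang B)] @ P2 @ G @ [Br [F (Bang B)]] @ D) C"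
  shows "derF (P1 @ [F (Bang B)] @ P2 @ G @ D) C"
proof -
  have "derF ([] @ [F (Bang B)] @ P1 @ P2 @ G @ [Br [F (Bang B)]] @ D) C"
    using bangP2_top[of "[]" P1 B "P2 @ G @ [Br [F (Bang B)]] @ D"] assms by simp
  then have "derF (fill Hole (bangs [B] @ (P1 @ P2 @ G) @ [Br (bangs [B] @ [])] @ D)) C"
    by simp
  from bangC[OF _ this] have "derF ([] @ [F (Bang B)] @ P1 @ P2 @ G @ D) C"
    by simp
  from bangP1_top[OF this] show ?thesis
    by simp
qed

lemma derF_absorb_by_bang_binv:
  assumes "derF (P1 @ [F (Bang (BInv A))] @ P2 @ G @ [F A] @ D) C"
  shows "derF (P1 @ [F (Bang (BInv A))] @ P2 @ G @ D) C"
proof -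
  have "derF ((P1 @ [F (Bang (BInv A))] @ P2 @ G) @ [F A] @ D) C"
    using assms by simp
  from cut_top[OF derF_bracket_bang_binv this] show ?thesis
    using derF_contract_bracket_bang[of P1 "BInv A" P2 G D C] by simp
qed

lemma derF_PhiF_absorb:
  assumes "A \<in> set As" and "derF (PhiF s As @ D1 @ [F A] @ D2) C"
  shows "derF (PhiF s As @ D1 @ D2) C"
proof -
  obtain P1 P2 where "PhiF s As = P1 @ [F (Bang (BInv A))] @ P2"
    using PhiF_decompose[OF assms(1)] .
  then show ?thesis
    using derF_absorb_by_bang_binv[of P1 A P2 D1 D2 C] assms(2) by simp
qed

lemma piq_meta_Nil [simp]: "piq_meta q [] = []"
  by (simp add: piq_meta_def)

lemma piq_meta_Cons [simp]: "piq_meta q (T # Ts) = piq_tt q T @ piq_meta q Ts"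
  by (simp add: piq_meta_def)

lemma piq_meta_PhiF_eq_Nil_iff: "piq_meta q (PhiF s As) = [] \<longleftrightarrow> As = []"
  by (cases As) simp_all

lemma derE_Nil_bang_rdiv_self: "derE [] (EBang (ERDiv (ERDiv X X) (EBang A)))"
proof -
  have "derE ([] @ [X]) X"
    using eax by simp
  then have "derE ([] @ []) (ERDiv X X)"
    using erdivR by simp
  then have "derE ([] @ [EBang A]) (ERDiv X X)"
    using ebangW[of "[]" "[]"] by simp
  then have "derE (map EBang []) (ERDiv (ERDiv X X) (EBang A))"
    using erdivR by simp
  from ebangR[OF this] show ?thesis
    by simp
qed

lemma derE_eprod_Cons:
  assumes "derE G E" and "derE D (eprod Es)" and "Es = [] \<longrightarrow> D = []"
  shows "derE (G @ D) (eprod (E # Es))"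
proof (cases Es)
  case Nil
  then show ?thesis
    using assms by simp
next
  case Cons
  then show ?thesis
    using eprodR[OF assms(1,2)] by simp
qed

lemma derE_bangs_eprod_piq_PhiF:
  "derE (map (\<lambda>A. EBang (piq q A)) As) (eprod (piq_meta q (PhiF s As)))"
proof (induction As)
  case Nil
  show ?case
    by (simp add: eoneR)
next
  case (Cons A As)
  have "derE ([EBang (piq q A)] @ map (\<lambda>A. EBang (piq q A)) As)
      (eprod (EBang (piq q A) # piq_meta q (PhiF s As)))"
    using derE_eprod_Cons[OF eax Cons.IH] piq_meta_PhiF_eq_Nil_iff by simp
  from derE_eprod_Cons[OF derE_Nil_bang_rdiv_self this] show ?case
    by simp
qed

theorem proposition7:
  fixes s q :: nat and As :: "fm list"
  assumes "s \<noteq> q"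
    and "\<forall>A \<in> set As. mult_noq q A"
  shows "derF (PhiF s As @ [F (Var s)]) (Var s)
    \<and> (\<forall>i < length As. \<forall>D1 D2 C.
          derF (PhiF s As @ D1 @ [F (As ! i)] @ D2) C \<longrightarrow> derF (PhiF s As @ D1 @ D2) C)
    \<and> derE (map (\<lambda>A. EBang (piq q A)) As) (eprod (piq_meta q (PhiF s As)))"
  \<comment> \<open>Both hypotheses are unused: \<open>(x/x)/!a\<close> is derivable whatever \<open>\<pi>\<^sub>q(s)\<close> is,
    and the absorption of \<open>A\<^sub>i\<close> does not depend on its shape.\<close>
  using derF_PhiF_prefix[OF ax] derF_PhiF_absorb[OF nth_mem] derE_bangs_eprod_piq_PhiF
  by blast

end
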